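(* Let $(a^*,b^* ),(c^*,d^* )$ be a pair of distinct corners maximizing $\min_\pi f_{abcd}(\pi)$ over all pairs of distinct corners, and let $\pi_{a^*b^*c^*d^*}$ be the minimizer of $f_{a^*b^*c^*d^*}$. Then $\pi^*=\pi_{a^*b^*c^*d^*}$ is the (unique) solution of the minimax problem $$\min_{\pi\in\mathbb R}\max_{(\mu,\sigma)\in D}F(\pi,\mu,\sigma).$$
   Context: Let $0<\mu_-<\mu_+$ and $0<\sigma_-<\sigma_+$ be real numbers, $D=[\mu_-,\mu_+]\times[\sigma_-,\sigma_+]$, and $h_0,h_1\in\mathbb R$. For $\pi\in\mathbb R$ and $(\mu,\sigma)\in D$ put $F(\pi,\mu,\sigma)=(h_0-\pi\mu)^2+(h_1-\pi\sigma)^2$. For corners $(a,b),(c,d)\in\{-,+\}^2$ let $f_{ab}(\pi)=F(\pi,\mu_a,\sigma_b)$ and $f_{abcd}(\pi)=\max(f_{ab}(\pi),f_{cd}(\pi))$. *)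

theory Defs
  imports Complex_Main
begin

definition Fobj :: "real \<Rightarrow> real \<Rightarrow> real \<Rightarrow> real \<Rightarrow> real \<Rightarrow> real" where
  "Fobj h0 h1 p mu sigma = (h0 - p * mu)^2 + (h1 - p * sigma)^2"

text \<open>Corners of D are indexed by pairs of signs, encoded as bool (True = +, False = -).\<close>
definition sel :: "real \<Rightarrow> real \<Rightarrow> bool \<Rightarrow> real" where
  "sel lo hi s = (if s then hi else lo)"

definition fcorner :: "real \<Rightarrow> real \<Rightarrow> real \<Rightarrow> real \<Rightarrow> real \<Rightarrow> real \<Rightarrow> bool \<times> bool \<Rightarrow> real \<Rightarrow> real" where
  "fcorner mum mup sgm sgp h0 h1 c p = Fobj h0 h1 p (sel mum mup (fst c)) (sel sgm sgp (snd c))"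

definition fpair :: "real \<Rightarrow> real \<Rightarrow> real \<Rightarrow> real \<Rightarrow> real \<Rightarrow> real \<Rightarrow> bool \<times> bool \<Rightarrow> bool \<times> bool \<Rightarrow> real \<Rightarrow> real" where
  "fpair mum mup sgm sgp h0 h1 c d p =
     max (fcorner mum mup sgm sgp h0 h1 c p) (fcorner mum mup sgm sgp h0 h1 d p)"

end

theory Submission
  imports Defs "HOL-Analysis.Analysis"
begin

(* For fixed (mu, sigma) with mu > 0 the objective F(pi, mu, sigma) is a
   strictly convex quadratic in pi, and for fixed pi it is a sum of two convex quadratics in
   mu and sigma separately; hence the worst case over the box D is attained at one of its
   four corners, i.e. sup_D F(pi, . , .) = max_e f_e(pi).  The problem thus becomes a minimax
   problem for finitely many strictly convex functions f_e.  If (cs, ds) is the pair of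
   distinct corners whose pairwise minimum value V = min f_{cs ds} is largest and ps
   minimizes f_{cs ds}, then every corner satisfies f_e(ps) <= V: otherwise the minimizers
   of f_{e cs} and f_{e ds} (both with value <= V) together with quasi-convexity either bound
   f_e(ps) by V directly or produce a second minimizer of f_{cs ds}, contradicting strict
   convexity.  Consequently max_e f_e(ps) = V <= f_{cs ds}(p) <= max_e f_e(p) for all p, with
   uniqueness again from strict convexity. *)

lemma sq_affine_convex_comb:
  fixes h k a b t :: real
  shows "(1 - t) * (h - k * a)\<^sup>2 + t * (h - k * b)\<^sup>2 - (h - k * ((1 - t) * a + t * b))\<^sup>2
         = t * (1 - t) * k\<^sup>2 * (b - a)\<^sup>2"
  by (simp add: algebra_simps power2_eq_square)

lemma convex_sq_affine: "convex_on UNIV (\<lambda>x::real. (h - k * x)\<^sup>2)"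
proof (rule convex_onI)
  fix t x y :: real
  assume "0 < t" "t < 1"
  then have "0 \<le> t * (1 - t) * k\<^sup>2 * (y - x)\<^sup>2" by simp
  then show "(h - k * ((1 - t) *\<^sub>R x + t *\<^sub>R y))\<^sup>2 \<le> (1 - t) * (h - k * x)\<^sup>2 + t * (h - k * y)\<^sup>2"
    using sq_affine_convex_comb[of t h k x y] by simp
qed simp

lemma Fobj_convex: "convex_on UNIV (\<lambda>p. Fobj h0 h1 p mu sg)"
  unfolding Fobj_def
  using convex_on_add[OF convex_sq_affine[of h0 mu] convex_sq_affine[of h1 sg]]
  by (simp add: mult.commute)

lemma convex_le_max_between:
  fixes f :: "real \<Rightarrow> real"
  assumes "convex_on UNIV f" "min a b \<le> x" "x \<le> max a b"
  shows "f x \<le> max (f a) (f b)"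
proof (cases "a \<le> b")
  case True
  then show ?thesis
    using convex_on_le_max[OF convex_on_subset[OF assms(1)], of a b x] assms by simp
next
  case False
  then show ?thesis
    using convex_on_le_max[OF convex_on_subset[OF assms(1)], of b a x] assms by (simp add: max.commute)
qed

lemma Fobj_midpoint_strict:
  assumes "a \<noteq> b" "mu \<noteq> 0"
  shows "Fobj h0 h1 ((a + b) / 2) mu sg < (Fobj h0 h1 a mu sg + Fobj h0 h1 b mu sg) / 2"
proof -
  have "(Fobj h0 h1 a mu sg + Fobj h0 h1 b mu sg) / 2 - Fobj h0 h1 ((a + b) / 2) mu sg
        = (b - a)\<^sup>2 * (mu\<^sup>2 + sg\<^sup>2) / 4"
    unfolding Fobj_def by (simp add: field_simps power2_eq_square)
  moreover have "0 < (b - a)\<^sup>2 * (mu\<^sup>2 + sg\<^sup>2) / 4"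
    using assms by (simp add: add_pos_nonneg)
  ultimately show ?thesis by linarith
qed

(* The maximum of two strictly convex functions has at most one minimizer: the midpoint of
   two minimizers would be strictly better. *)
lemma max_pair_unique_minimizer:
  fixes g1 g2 :: "real \<Rightarrow> real"
  assumes strict1: "\<And>a b. a \<noteq> b \<Longrightarrow> g1 ((a + b) / 2) < (g1 a + g1 b) / 2"
    and strict2: "\<And>a b. a \<noteq> b \<Longrightarrow> g2 ((a + b) / 2) < (g2 a + g2 b) / 2"
    and minimizer: "\<And>p. max (g1 ps) (g2 ps) \<le> max (g1 p) (g2 p)"
    and u: "max (g1 u) (g2 u) \<le> max (g1 ps) (g2 ps)"
  shows "u = ps"
proof (rule ccontr)
  assume "u \<noteq> ps"
  let ?m = "(u + ps) / 2"
  have "g1 ?m < max (g1 ps) (g2 ps)" "g2 ?m < max (g1 ps) (g2 ps)"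
    using strict1[OF \<open>u \<noteq> ps\<close>] strict2[OF \<open>u \<noteq> ps\<close>] u by auto
  then show False
    using minimizer[of ?m] by (simp add: max_def split: if_splits)
qed

lemma all_corners_below_at_minimax:
  fixes E :: "'c \<Rightarrow> real \<Rightarrow> real" and cs ds :: 'c and ps :: real
  defines "V \<equiv> max (E cs ps) (E ds ps)"
  assumes quasi: "\<And>e a b x. min a b \<le> x \<Longrightarrow> x \<le> max a b \<Longrightarrow> E e x \<le> max (E e a) (E e b)"
    and strict: "\<And>e a b. a \<noteq> b \<Longrightarrow> E e ((a + b) / 2) < (E e a + E e b) / 2"
    and pair_min_below: "\<And>c d. c \<noteq> d \<Longrightarrow> \<exists>q. max (E c q) (E d q) \<le> V"
    and minimizer: "\<And>p. V \<le> max (E cs p) (E ds p)"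
  shows "E e ps \<le> V"
proof (rule ccontr)
  assume above: "\<not> E e ps \<le> V"
  then have "e \<noteq> cs" "e \<noteq> ds" by (auto simp: V_def)
  then obtain q r where q: "max (E e q) (E cs q) \<le> V" and r: "max (E e r) (E ds r) \<le> V"
    using pair_min_below by blast
  have "\<not> (min q r \<le> ps \<and> ps \<le> max q r)"
    using quasi[of q r ps e] q r above by auto
  then have same_side: "(q < ps \<and> r < ps) \<or> (ps < q \<and> ps < r)"
    by auto
  define u where "u = (if q < ps then max q r else min q r)"
  have "u \<noteq> ps" "min q ps \<le> u" "u \<le> max q ps" "min r ps \<le> u" "u \<le> max r ps"
    using same_side by (auto simp: u_def)
  then have "E cs u \<le> V" "E ds u \<le> V"
    using quasi[of q ps u cs] quasi[of r ps u ds] q r by (auto simp: V_def max_def split: if_splits)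
  then have "u = ps"
    using max_pair_unique_minimizer[of "E cs" "E ds" ps u] strict minimizer
    by (simp add: V_def)
  with \<open>u \<noteq> ps\<close> show False ..
qed

lemma continuous_coercive_attains_min:
  fixes g :: "real \<Rightarrow> real"
  assumes cont: "continuous_on UNIV g" and coercive: "\<And>p. R \<le> \<bar>p\<bar> \<Longrightarrow> g 0 \<le> g p"
  shows "\<exists>q. \<forall>p. g q \<le> g p"
proof -
  let ?K = "{-\<bar>R\<bar>..\<bar>R\<bar>}"
  have "continuous_on ?K g"
    using cont by (rule continuous_on_subset) simp
  then obtain q where "q \<in> ?K" and q_min: "\<And>y. y \<in> ?K \<Longrightarrow> g q \<le> g y"
    using continuous_attains_inf[of ?K g] by auto
  have "g q \<le> g p" for p
  proof (cases "p \<in> ?K")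
    case False
    then have "R \<le> \<bar>p\<bar>" by auto
    then show ?thesis
      using coercive q_min[of 0] by (meson abs_ge_zero atLeastAtMost_iff neg_le_0_iff_le order_trans)
  qed (rule q_min)
  then show ?thesis by blast
qed

lemma sq_affine_coercive:
  fixes h k p m B :: real
  assumes "0 < m" "m \<le> \<bar>k\<bar>" "0 \<le> B" "(\<bar>h\<bar> + B + 1) / m \<le> \<bar>p\<bar>"
  shows "B \<le> (h - k * p)\<^sup>2"
proof -
  have "\<bar>h\<bar> + B + 1 \<le> m * \<bar>p\<bar>"
    using assms(1,4) by (simp add: field_simps)
  also have "\<dots> \<le> \<bar>k * p\<bar>"
    using assms(2) by (simp add: abs_mult mult_right_mono)
  finally have big: "B + 1 \<le> \<bar>h - k * p\<bar>"
    by linarith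
  have "\<bar>h - k * p\<bar> * 1 \<le> \<bar>h - k * p\<bar> * \<bar>h - k * p\<bar>"
    using big assms(3) by (intro mult_left_mono) auto
  then show ?thesis
    using big by (simp add: power2_eq_square abs_mult_self_eq)
qed

(* Each pairwise objective f_{cd} attains its minimum, because mu >= mum > 0 makes it coercive. *)
lemma fpair_attains_min:
  assumes "0 < mum" "mum < mup"
  shows "\<exists>q. \<forall>p. fpair mum mup sgm sgp h0 h1 c d q \<le> fpair mum mup sgm sgp h0 h1 c d p"
proof -
  let ?g = "fpair mum mup sgm sgp h0 h1 c d"
  let ?mu = "sel mum mup (fst c)"
  have "continuous_on UNIV ?g"
    unfolding fpair_def fcorner_def Fobj_def by (intro continuous_intros)
  moreover have "?g 0 \<le> ?g p" if "(\<bar>h0\<bar> + ?g 0 + 1) / mum \<le> \<bar>p\<bar>" for p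
  proof -
    have "0 \<le> ?g 0"
      unfolding fpair_def fcorner_def Fobj_def by (simp add: le_max_iff_disj)
    moreover have "mum \<le> \<bar>?mu\<bar>"
      using assms by (simp add: sel_def)
    ultimately have "?g 0 \<le> (h0 - ?mu * p)\<^sup>2"
      using sq_affine_coercive[OF assms(1)] that by blast
    also have "\<dots> \<le> ?g p"
      unfolding fpair_def fcorner_def Fobj_def by (simp add: mult.commute le_max_iff_disj)
    finally show ?thesis .
  qed
  ultimately show ?thesis
    by (rule continuous_coercive_attains_min)
qed

lemma le_max_sel:
  assumes "x \<le> max (g lo) (g hi)"
  shows "\<exists>b. x \<le> g (sel lo hi b)"
proof (cases "g lo \<le> g hi")
  case True
  then have "x \<le> g (sel lo hi True)"
    using assms by (simp add: sel_def max_def)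
  then show ?thesis ..
next
  case False
  then have "x \<le> g (sel lo hi False)"
    using assms by (simp add: sel_def max_def)
  then show ?thesis ..
qed

lemma worst_case_at_corner:
  assumes "mum \<le> mup" "sgm \<le> sgp"
  shows "(SUP x\<in>{mum..mup} \<times> {sgm..sgp}. Fobj h0 h1 p (fst x) (snd x))
         = Max (range (\<lambda>c. fcorner mum mup sgm sgp h0 h1 c p))"
proof -
  let ?D = "{mum..mup} \<times> {sgm..sgp}"
  let ?F = "\<lambda>x. Fobj h0 h1 p (fst x) (snd x)"
  let ?M = "Max (range (\<lambda>c. fcorner mum mup sgm sgp h0 h1 c p))"
  have sel_in: "sel lo hi b \<in> {lo..hi}" if "lo \<le> hi" for lo hi :: real and b
    using that by (simp add: sel_def)
  have F_le_M: "?F x \<le> ?M" if "x \<in> ?D" for x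
  proof -
    obtain mu sg where x: "x = (mu, sg)" "mu \<in> {mum..mup}" "sg \<in> {sgm..sgp}"
      using \<open>x \<in> ?D\<close> by auto
    have "(h0 - p * mu)\<^sup>2 \<le> max ((h0 - p * mum)\<^sup>2) ((h0 - p * mup)\<^sup>2)"
      using convex_le_max_between[OF convex_sq_affine[of h0 p]] x by simp
    then obtain bm where bm: "(h0 - p * mu)\<^sup>2 \<le> (h0 - p * sel mum mup bm)\<^sup>2"
      using le_max_sel[of _ "\<lambda>m. (h0 - p * m)\<^sup>2" mum mup] by blast
    have "(h1 - p * sg)\<^sup>2 \<le> max ((h1 - p * sgm)\<^sup>2) ((h1 - p * sgp)\<^sup>2)"
      using convex_le_max_between[OF convex_sq_affine[of h1 p]] x by simp
    then obtain bs where bs: "(h1 - p * sg)\<^sup>2 \<le> (h1 - p * sel sgm sgp bs)\<^sup>2"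
      using le_max_sel[of _ "\<lambda>s. (h1 - p * s)\<^sup>2" sgm sgp] by blast
    have "?F x \<le> fcorner mum mup sgm sgp h0 h1 (bm, bs) p"
      using bm bs x unfolding fcorner_def Fobj_def by simp
    also have "\<dots> \<le> ?M"
      by (rule Max_ge) simp_all
    finally show ?thesis .
  qed
  have "?M \<in> range (\<lambda>c. fcorner mum mup sgm sgp h0 h1 c p)"
    by (rule Max_in) simp_all
  then obtain c where c: "?M = fcorner mum mup sgm sgp h0 h1 c p"
    by blast
  have "(sel mum mup (fst c), sel sgm sgp (snd c)) \<in> ?D"
    using sel_in assms by auto
  moreover have "bdd_above (?F ` ?D)"
    using F_le_M by (intro bdd_aboveI2)
  ultimately have "?F (sel mum mup (fst c), sel sgm sgp (snd c)) \<le> Sup (?F ` ?D)"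
    by (rule cSUP_upper)
  then have "?M \<le> Sup (?F ` ?D)"
    using c by (simp add: fcorner_def)
  moreover have "Sup (?F ` ?D) \<le> ?M"
    using assms F_le_M by (intro cSUP_least) auto
  ultimately show ?thesis
    by (rule antisym[rotated])
qed

lemma minimax_from_best_pair:
  fixes E :: "'c::finite \<Rightarrow> real \<Rightarrow> real" and cs ds :: 'c and ps :: real
  assumes quasi: "\<And>e a b x. min a b \<le> x \<Longrightarrow> x \<le> max a b \<Longrightarrow> E e x \<le> max (E e a) (E e b)"
    and strict: "\<And>e a b. a \<noteq> b \<Longrightarrow> E e ((a + b) / 2) < (E e a + E e b) / 2"
    and attains: "\<And>c d. \<exists>q. \<forall>p. max (E c q) (E d q) \<le> max (E c p) (E d p)"
    and maximizing: "\<forall>c d. c \<noteq> d \<longrightarrow>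
                       (INF p. max (E c p) (E d p)) \<le> (INF p. max (E cs p) (E ds p))"
    and minimizer: "\<forall>p. max (E cs ps) (E ds ps) \<le> max (E cs p) (E ds p)"
  shows "(\<forall>p. Max (range (\<lambda>e. E e ps)) \<le> Max (range (\<lambda>e. E e p)))
       \<and> (\<forall>p. Max (range (\<lambda>e. E e p)) \<le> Max (range (\<lambda>e. E e ps)) \<longrightarrow> p = ps)"
proof -
  let ?f = "\<lambda>c d p. max (E c p) (E d p)"
  let ?G = "\<lambda>p. Max (range (\<lambda>e. E e p))"
  define V where "V = ?f cs ds ps"
  have min_value: "(INF p. ?f c d p) = ?f c d q" if "\<forall>p. ?f c d q \<le> ?f c d p" for c d q
    using that by (intro cInf_eq_minimum) auto
  have pair_min_below: "\<exists>q. ?f c d q \<le> V" if "c \<noteq> d" for c d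
  proof -
    obtain q where q: "\<forall>p. ?f c d q \<le> ?f c d p"
      using attains by blast
    have "?f c d q = (INF p. ?f c d p)"
      using min_value[OF q] ..
    also have "\<dots> \<le> (INF p. ?f cs ds p)"
      using maximizing that by blast
    also have "\<dots> = V"
      unfolding V_def by (rule min_value[OF minimizer])
    finally show ?thesis ..
  qed
  have "E e ps \<le> V" for e
    unfolding V_def
    by (rule all_corners_below_at_minimax[of E, OF quasi strict])
      (use pair_min_below minimizer in \<open>simp_all add: V_def\<close>)
  then have G_ps: "?G ps \<le> V"
    by simp
  have f_le_G: "?f cs ds p \<le> ?G p" for p
    by simp
  have "?G ps \<le> ?G p" for p
    using G_ps minimizer f_le_G[of p] unfolding V_def by (meson order_trans)
  moreover have "p = ps" if "?G p \<le> ?G ps" for p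
  proof (rule max_pair_unique_minimizer[of "E cs" "E ds" ps p])
    show "?f cs ds p \<le> ?f cs ds ps"
      using f_le_G[of p] that G_ps unfolding V_def by (meson order_trans)
  qed (use strict minimizer in auto)
  ultimately show ?thesis
    by blast
qed

theorem mainTheorem13:
  fixes mum mup sgm sgp h0 h1 :: real
    and cs ds :: "bool \<times> bool"
    and ps :: real
  defines "D \<equiv> {mum..mup} \<times> {sgm..sgp}"
  defines "f \<equiv> fpair mum mup sgm sgp h0 h1"
  assumes "0 < mum" "mum < mup" "0 < sgm" "sgm < sgp"
    and distinct: "cs \<noteq> ds"
    and maximizing: "\<forall>c d. c \<noteq> d \<longrightarrow> (INF p. f c d p) \<le> (INF p. f cs ds p)"
    and minimizer: "\<forall>p. f cs ds ps \<le> f cs ds p"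
  shows "(\<forall>p. (SUP x\<in>D. Fobj h0 h1 ps (fst x) (snd x)) \<le> (SUP x\<in>D. Fobj h0 h1 p (fst x) (snd x)))
       \<and> (\<forall>p. (SUP x\<in>D. Fobj h0 h1 p (fst x) (snd x)) \<le> (SUP x\<in>D. Fobj h0 h1 ps (fst x) (snd x)) \<longrightarrow> p = ps)"
proof -
  define E where "E = fcorner mum mup sgm sgp h0 h1"
  have f_E: "f c d = (\<lambda>p. max (E c p) (E d p))" for c d
    unfolding f_def E_def fpair_def ..
  have quasi: "E e x \<le> max (E e a) (E e b)" if "min a b \<le> x" "x \<le> max a b" for e a b x
    unfolding E_def fcorner_def using convex_le_max_between[OF Fobj_convex that] .
  have "sel mum mup b \<noteq> 0" for b
    using assms(3,4) by (simp add: sel_def)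
  then have strict: "E e ((a + b) / 2) < (E e a + E e b) / 2" if "a \<noteq> b" for e a b
    unfolding E_def fcorner_def using Fobj_midpoint_strict[OF that] by blast
  have attains: "\<exists>q. \<forall>p. max (E c q) (E d q) \<le> max (E c p) (E d p)" for c d
    using fpair_attains_min[OF assms(3,4)] unfolding E_def fpair_def by blast
  have "(SUP x\<in>D. Fobj h0 h1 p (fst x) (snd x)) = Max (range (\<lambda>e. E e p))" for p
    unfolding D_def E_def using worst_case_at_corner assms(4,6) by simp
  then show ?thesis
    using minimax_from_best_pair[of E cs ds ps, OF quasi strict attains] maximizing minimizer
    unfolding f_E by presburger
qed

end
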